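(* Let $N$ be a positive integer, $C=N+1$, and $0<\eta\le\frac{1}{270C}$. Let $b_1,b_2\in\mathbb{R}^A$ and $a_0\in\Delta_A$ with all coordinates positive, and define $$a_1=\arg\min_{a\in\Delta_A}F_1(a),\ F_1(a)=\langle a,b_1\rangle+D_\psi(a,a_0);\qquad a_2=\arg\min_{a\in\Delta_A}F_2(a),\ F_2(a)=\langle a,b_2\rangle+D_\psi(a,a_0).$$ If $\|b_1-b_2\|_{\nabla^{-2}\psi(a_1)}\le 12\sqrt\eta\,C$, then for all $i\in\{1,\dots,A\}$, $|a_{2,i}-a_{1,i}|\le 60\,\eta\,C\,a_{1,i}$.
   Context: $\Delta_A$ is the probability simplex in $\mathbb{R}^A$. $\psi(x)=\frac1\eta\sum_{i=1}^A\log\frac{1}{x_i}$ for $x$ with positive coordinates, $D_\psi(x,x')=\psi(x)-\psi(x')-\langle\nabla\psi(x'),x-x'\rangle$. $\nabla^2\psi(x)$ is the diagonal matrix with entries $\frac{1}{\eta x_i^2}$ and $\nabla^{-2}\psi(x)$ its inverse (diagonal entries $\eta x_i^2$). For a positive semidefinite matrix $M$, $\|v\|_M=\sqrt{v^\top Mv}$. *)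

theory Defs
  imports Complex_Main
begin

text \<open>Coordinates are indexed by a finite type 'i (so A = CARD('i)).
  Vectors in R^A are functions 'i => real.\<close>

definition simplex :: "('i::finite \<Rightarrow> real) set" where
  "simplex = {x. (\<forall>i. 0 \<le> x i) \<and> (\<Sum>i\<in>UNIV. x i) = 1}"

definition psi :: "real \<Rightarrow> ('i::finite \<Rightarrow> real) \<Rightarrow> real" where
  "psi \<eta> x = (1 / \<eta>) * (\<Sum>i\<in>UNIV. ln (1 / x i))"

definition grad_psi :: "real \<Rightarrow> ('i::finite \<Rightarrow> real) \<Rightarrow> 'i \<Rightarrow> real" where
  "grad_psi \<eta> x i = - 1 / (\<eta> * x i)"

definition inner_vec :: "('i::finite \<Rightarrow> real) \<Rightarrow> ('i \<Rightarrow> real) \<Rightarrow> real" where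
  "inner_vec u v = (\<Sum>i\<in>UNIV. u i * v i)"

definition bregman :: "real \<Rightarrow> ('i::finite \<Rightarrow> real) \<Rightarrow> ('i \<Rightarrow> real) \<Rightarrow> real" where
  "bregman \<eta> x x' = psi \<eta> x - psi \<eta> x' - inner_vec (grad_psi \<eta> x') (\<lambda>i. x i - x' i)"

definition inv_hess_psi :: "real \<Rightarrow> ('i::finite \<Rightarrow> real) \<Rightarrow> 'i \<Rightarrow> 'i \<Rightarrow> real" where
  "inv_hess_psi \<eta> x i j = (if i = j then \<eta> * (x i)\<^sup>2 else 0)"

definition mat_norm :: "('i::finite \<Rightarrow> 'i \<Rightarrow> real) \<Rightarrow> ('i \<Rightarrow> real) \<Rightarrow> real" where
  "mat_norm M v = sqrt (\<Sum>i\<in>UNIV. \<Sum>j\<in>UNIV. v i * M i j * v j)"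

definition obj :: "real \<Rightarrow> ('i::finite \<Rightarrow> real) \<Rightarrow> ('i \<Rightarrow> real) \<Rightarrow> ('i \<Rightarrow> real) \<Rightarrow> real" where
  "obj \<eta> b a0 a = inner_vec a b + bregman \<eta> a a0"

text \<open>Since D_psi(a,a0) = +infinity when some
  coordinate of a is 0, the minimization effectively ranges over the points of the
  simplex with positive coordinates, and the minimizer itself has positive coordinates.\<close>
definition is_argmin_simplex :: "real \<Rightarrow> ('i::finite \<Rightarrow> real) \<Rightarrow> ('i \<Rightarrow> real) \<Rightarrow> ('i \<Rightarrow> real) \<Rightarrow> bool" where
  "is_argmin_simplex \<eta> b a0 a \<longleftrightarrow>
     a \<in> simplex \<and> (\<forall>i. 0 < a i) \<and>
     (\<forall>a'\<in>simplex. (\<forall>i. 0 < a' i) \<longrightarrow> obj \<eta> b a0 a \<le> obj \<eta> b a0 a')"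

end

theory Submission
  imports Defs "HOL-Analysis.L2_Norm"
begin

(*
  The minimiser of <a, b> + D_psi(a, a0) over the simplex satisfies the first-order condition
  1/a_k = 1/a0_k + eta (b_k - l) for a Lagrange multiplier l. Subtracting the conditions for b1
  and b2 gives 1/a2_k = 1/a1_k - mu - c_k with c = eta (b1 - b2), i.e. a2_k = a1_k / (1 - y_k)
  where y_k = mu a1_k + x_k and x_k = a1_k c_k. Since the local norm of b1 - b2 at a1 is
  ||x||_2 / sqrt eta, the hypothesis gives ||x||_2 <= r := 12 eta C. Since a1 and a2 both sum to 1, sum_k a1_k / (1 - y_k) = 1.
  Convexity of 1/(1 - y) turns this into mu ||a1||_2 <= r; for mu ||a1||_2 >= -2r, note that the
  sum is increasing in mu and is already at most 1 at mu = -2r / ||a1||_2. Hence |y_k| <= 3r and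
  |a2_k - a1_k| <= 3r / (1 - 3r) a1_k <= 5r a1_k = 60 eta C a1_k.
*)

lemma obj_eq_sum:
  assumes "\<forall>k. 0 < a k" "\<forall>k. 0 < a0 k"
  shows "obj \<eta> b a0 a =
    (\<Sum>k\<in>UNIV. a k * b k - ln (a k) / \<eta> + ln (a0 k) / \<eta> + (a k - a0 k) / (\<eta> * a0 k))"
proof -
  have ln_inverse: "ln (1 / t) = - ln t" if "t > 0" for t :: real
    using that by (simp add: ln_div)
  show ?thesis
    using assms unfolding obj_def bregman_def psi_def inner_vec_def grad_psi_def
    by (simp add: ln_inverse sum.distrib sum_subtractf sum_divide_distrib sum_negf sum_distrib_left
      diff_divide_distrib algebra_simps)
qed

lemma separable_min_simplex_equal_derivatives:
  fixes a :: "'i::finite \<Rightarrow> real" and \<phi> :: "'i \<Rightarrow> real \<Rightarrow> real" and \<phi>' :: "'i \<Rightarrow> real"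
  assumes a: "a \<in> simplex" "\<forall>k. 0 < a k"
    and deriv: "\<And>k. (\<phi> k has_real_derivative \<phi>' k) (at (a k))"
    and min: "\<And>a'. a' \<in> simplex \<Longrightarrow> \<forall>k. 0 < a' k \<Longrightarrow>
                (\<Sum>k\<in>UNIV. \<phi> k (a k)) \<le> (\<Sum>k\<in>UNIV. \<phi> k (a' k))"
  shows "\<phi>' i = \<phi>' j"
proof -
  define d :: "'i \<Rightarrow> real" where "d k = (if k = i then 1 else 0) - (if k = j then 1 else 0)" for k
  define \<delta> where "\<delta> = min (a i) (a j)"
  have "\<delta> > 0" using a(2) by (simp add: \<delta>_def)
  have moved_pos: "0 < a k + t * d k" if "\<bar>t\<bar> < \<delta>" for t k
    using that a(2) unfolding d_def \<delta>_def
    by (cases "k = i"; cases "k = j"; auto simp: abs_less_iff)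
  have moved_simplex: "(\<lambda>k. a k + t * d k) \<in> simplex" if "\<bar>t\<bar> < \<delta>" for t
  proof -
    have "(\<Sum>k\<in>UNIV. d k) = 0" unfolding d_def by (simp add: sum_subtractf)
    then have "(\<Sum>k\<in>UNIV. a k + t * d k) = 1"
      using a(1) by (simp add: simplex_def sum.distrib flip: sum_distrib_left)
    then show ?thesis using moved_pos[OF that] unfolding simplex_def by (auto intro: less_imp_le)
  qed
  have "((\<lambda>t. \<Sum>k\<in>UNIV. \<phi> k (a k + t * d k)) has_real_derivative (\<Sum>k\<in>UNIV. \<phi>' k * d k)) (at 0)"
  proof (rule DERIV_sum)
    fix k
    have "((\<lambda>t. a k + t * d k) has_real_derivative d k) (at 0)"
      by (auto intro!: derivative_eq_intros)
    then show "((\<lambda>t. \<phi> k (a k + t * d k)) has_real_derivative \<phi>' k * d k) (at 0)"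
      using deriv[of k] by (auto intro: DERIV_chain2)
  qed
  moreover have "\<forall>t. \<bar>0 - t\<bar> < \<delta> \<longrightarrow>
      (\<Sum>k\<in>UNIV. \<phi> k (a k + 0 * d k)) \<le> (\<Sum>k\<in>UNIV. \<phi> k (a k + t * d k))"
    using min moved_simplex moved_pos by simp
  ultimately have "(\<Sum>k\<in>UNIV. \<phi>' k * d k) = 0"
    using DERIV_local_min \<open>\<delta> > 0\<close> by blast
  moreover have "(\<Sum>k\<in>UNIV. \<phi>' k * d k) = \<phi>' i - \<phi>' j"
    unfolding d_def
    by (simp add: right_diff_distrib sum_subtractf if_distrib[of "\<lambda>z. _ * z"] sum.delta cong: if_cong)
  ultimately show ?thesis by simp
qed

lemma is_argmin_simplex_reciprocal:
  fixes a a0 b :: "'i::finite \<Rightarrow> real"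
  assumes am: "is_argmin_simplex \<eta> b a0 a" and "0 < \<eta>" and a0: "\<forall>k. 0 < a0 k"
  shows "\<exists>c. \<forall>k. 1 / a k = 1 / a0 k + \<eta> * (b k - c)"
proof -
  have a: "a \<in> simplex" "\<forall>k. 0 < a k"
    and min: "\<And>a'. a' \<in> simplex \<Longrightarrow> \<forall>k. 0 < a' k \<Longrightarrow> obj \<eta> b a0 a \<le> obj \<eta> b a0 a'"
    using am unfolding is_argmin_simplex_def by auto
  define \<phi> where "\<phi> k t = t * b k - ln t / \<eta> + ln (a0 k) / \<eta> + (t - a0 k) / (\<eta> * a0 k)" for k t
  define \<phi>' where "\<phi>' k = b k - 1 / (\<eta> * a k) + 1 / (\<eta> * a0 k)" for k
  have "(\<phi> k has_real_derivative \<phi>' k) (at (a k))" for k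
    using a(2)[rule_format, of k] a0[rule_format, of k] \<open>0 < \<eta>\<close> unfolding \<phi>_def \<phi>'_def
    by (auto intro!: derivative_eq_intros simp: field_simps)
  moreover have "(\<Sum>k\<in>UNIV. \<phi> k (a k)) \<le> (\<Sum>k\<in>UNIV. \<phi> k (a' k))"
    if "a' \<in> simplex" "\<forall>k. 0 < a' k" for a'
    using min[OF that] unfolding obj_eq_sum[OF a(2) a0] obj_eq_sum[OF that(2) a0] \<phi>_def .
  ultimately have const: "\<phi>' k = \<phi>' undefined" for k
    by (rule separable_min_simplex_equal_derivatives[OF a])
  have scaled: "\<eta> * \<phi>' k = \<eta> * b k - 1 / a k + 1 / a0 k" for k
    using a(2)[rule_format, of k] a0[rule_format, of k] \<open>0 < \<eta>\<close>
    by (simp add: \<phi>'_def field_simps)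
  have "1 / a k = 1 / a0 k + \<eta> * (b k - \<phi>' undefined)" for k
    using scaled[of k] unfolding const[of k] by (simp add: right_diff_distrib)
  then show ?thesis by blast
qed

lemma L2_set_power2: "finite A \<Longrightarrow> (L2_set f A)\<^sup>2 = (\<Sum>i\<in>A. (f i)\<^sup>2)"
  unfolding L2_set_def by (simp add: sum_nonneg)

lemma L2_set_scale: "L2_set (\<lambda>i. c * f i) A = \<bar>c\<bar> * L2_set f A"
  unfolding L2_set_def by (simp add: power_mult_distrib real_sqrt_mult flip: sum_distrib_left)

lemma abs_le_L2_set: "finite A \<Longrightarrow> i \<in> A \<Longrightarrow> \<bar>f i\<bar> \<le> L2_set f A"
  using member_le_L2_set[of A i "\<lambda>i. \<bar>f i\<bar>"] by (simp add: L2_set_def)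

lemma abs_sum_mult_le_L2_set: "\<bar>\<Sum>i\<in>A. f i * g i\<bar> \<le> L2_set f A * L2_set g A"
  using sum_abs[of "\<lambda>i. f i * g i" A] L2_set_mult_ineq[of f g A] by (simp add: abs_mult)

lemma L2_set_simplex_pos:
  assumes "p \<in> simplex"
  shows "0 < L2_set p UNIV"
proof -
  have "\<not> (\<forall>k. p k = 0)"
  proof
    assume "\<forall>k. p k = 0"
    then have "sum p UNIV = 0" by simp
    with assms show False by (simp add: simplex_def)
  qed
  then show ?thesis
    using L2_set_eq_0_iff[of UNIV p] L2_set_nonneg[of p UNIV] by (simp add: order_less_le)
qed

lemma mat_norm_inv_hess_psi:
  assumes "0 \<le> \<eta>"
  shows "mat_norm (inv_hess_psi \<eta> x) v = sqrt \<eta> * L2_set (\<lambda>i. x i * v i) UNIV"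
proof -
  have "mat_norm (inv_hess_psi \<eta> x) v = sqrt (\<Sum>i\<in>UNIV. \<eta> * (x i * v i)\<^sup>2)"
    unfolding mat_norm_def inv_hess_psi_def
    by (simp add: if_distrib[of "\<lambda>z. _ * z"] if_distrib[of "\<lambda>z. z * _"] sum.delta cong: if_cong)
      (simp add: power2_eq_square algebra_simps)
  then show ?thesis
    using assms by (simp add: L2_set_def real_sqrt_mult flip: sum_distrib_left)
qed

lemma sum_mult_le_0_if_sum_divide_eq:
  fixes w y :: "'a \<Rightarrow> real"
  assumes "finite A" and w: "\<And>k. k \<in> A \<Longrightarrow> 0 \<le> w k" and y: "\<And>k. k \<in> A \<Longrightarrow> y k < 1"
    and balance: "(\<Sum>k\<in>A. w k / (1 - y k)) = sum w A"
  shows "(\<Sum>k\<in>A. w k * y k) \<le> 0"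
proof -
  have "w k * y k \<le> w k / (1 - y k) - w k" if "k \<in> A" for k
  proof -
    have "w k / (1 - y k) - w k - w k * y k = w k * (y k)\<^sup>2 / (1 - y k)"
      using y[OF that] by (simp add: field_simps power2_eq_square)
    moreover have "0 \<le> w k * (y k)\<^sup>2 / (1 - y k)"
      using w[OF that] y[OF that] by simp
    ultimately show ?thesis by linarith
  qed
  then have "(\<Sum>k\<in>A. w k * y k) \<le> (\<Sum>k\<in>A. w k / (1 - y k) - w k)"
    by (rule sum_mono)
  also have "\<dots> = 0"
    using balance by (simp add: sum_subtractf)
  finally show ?thesis .
qed

lemma reciprocal_shift_multiplier_le:
  fixes p x :: "'i::finite \<Rightarrow> real"
  assumes p: "p \<in> simplex" and y: "\<And>k. \<mu> * p k + x k < 1"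
    and balance: "(\<Sum>k\<in>UNIV. p k / (1 - (\<mu> * p k + x k))) = 1"
    and x: "L2_set x UNIV \<le> r"
  shows "\<mu> * L2_set p UNIV \<le> r"
proof -
  let ?M = "L2_set p UNIV"
  have "\<mu> * ?M\<^sup>2 + (\<Sum>k\<in>UNIV. p k * x k) = (\<Sum>k\<in>UNIV. p k * (\<mu> * p k + x k))"
    unfolding L2_set_power2[OF finite_UNIV]
    by (simp add: power2_eq_square sum.distrib sum_distrib_left algebra_simps)
  also have "\<dots> \<le> 0"
    using p y balance by (intro sum_mult_le_0_if_sum_divide_eq) (auto simp: simplex_def)
  moreover have "\<bar>\<Sum>k\<in>UNIV. p k * x k\<bar> \<le> ?M * r"
    using abs_sum_mult_le_L2_set[of p x UNIV] mult_left_mono[OF x L2_set_nonneg[of p UNIV]]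
    by linarith
  ultimately have "\<mu> * ?M\<^sup>2 \<le> ?M * r"
    by linarith
  then have "?M * (\<mu> * ?M) \<le> ?M * r"
    by (simp add: power2_eq_square algebra_simps)
  then show ?thesis
    using L2_set_simplex_pos[OF p] by simp
qed

lemma reciprocal_shift_sum_le_one:
  fixes p x :: "'i::finite \<Rightarrow> real"
  assumes p: "p \<in> simplex" and x: "L2_set x UNIV \<le> r" and r: "r \<le> 1 / 10"
  defines "z \<equiv> \<lambda>k. - (2 * r / L2_set p UNIV) * p k + x k"
  shows "\<forall>k. z k \<le> r" and "(\<Sum>k\<in>UNIV. p k / (1 - z k)) \<le> 1"
proof -
  let ?M = "L2_set p UNIV"
  have M: "0 < ?M" by (rule L2_set_simplex_pos[OF p])
  have r0: "0 \<le> r" using x L2_set_nonneg[of x UNIV] by linarith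
  have p0: "0 \<le> p k" and p_le: "p k \<le> ?M" for k
    using p member_le_L2_set[of UNIV k p] by (auto simp: simplex_def)
  show z_le: "\<forall>k. z k \<le> r"
  proof
    fix k
    have "- (2 * r / ?M) * p k \<le> 0" using r0 M p0[of k] by (simp add: mult_nonneg_nonneg)
    moreover have "x k \<le> r" using abs_le_L2_set[of UNIV k x] x by simp
    ultimately show "z k \<le> r" unfolding z_def by linarith
  qed
  have "p k / (1 - z k) \<le> p k + p k * z k + p k * (z k)\<^sup>2 / (1 - r)" for k
  proof -
    have den: "0 < 1 - r" "1 - r \<le> 1 - z k" using z_le r by auto
    then have "p k / (1 - z k) = p k + p k * z k + p k * (z k)\<^sup>2 / (1 - z k)"
      by (simp add: field_simps power2_eq_square)
    also have "p k * (z k)\<^sup>2 / (1 - z k) \<le> p k * (z k)\<^sup>2 / (1 - r)"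
      using den p0[of k] by (intro divide_left_mono) auto
    finally show ?thesis by simp
  qed
  then have "(\<Sum>k\<in>UNIV. p k / (1 - z k))
      \<le> (\<Sum>k\<in>UNIV. p k + p k * z k + p k * (z k)\<^sup>2 / (1 - r))"
    by (rule sum_mono)
  also have "\<dots> = 1 + (\<Sum>k\<in>UNIV. p k * z k) + (\<Sum>k\<in>UNIV. p k * (z k)\<^sup>2) / (1 - r)"
    using p by (simp add: simplex_def sum.distrib sum_divide_distrib)
  also have "\<dots> \<le> 1 - r * ?M + 9 * r\<^sup>2 * ?M / (1 - r)"
  proof -
    define c where "c = 2 * r / ?M"
    have "(\<Sum>k\<in>UNIV. p k * z k) = (\<Sum>k\<in>UNIV. - c * (p k)\<^sup>2 + p k * x k)"
      unfolding z_def c_def by (simp add: power2_eq_square algebra_simps)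
    also have "\<dots> = - (2 * r / ?M) * ?M\<^sup>2 + (\<Sum>k\<in>UNIV. p k * x k)"
      unfolding L2_set_power2[OF finite_UNIV] c_def
      by (simp add: sum_subtractf flip: sum_divide_distrib sum_distrib_left)
    also have "\<dots> \<le> - 2 * r * ?M + ?M * r"
    proof -
      have "\<bar>\<Sum>k\<in>UNIV. p k * x k\<bar> \<le> ?M * r"
        using abs_sum_mult_le_L2_set[of p x UNIV] mult_left_mono[OF x L2_set_nonneg[of p UNIV]]
        by linarith
      then show ?thesis using M by (simp add: power2_eq_square abs_le_iff mult.commute)
    qed
    finally have lin: "(\<Sum>k\<in>UNIV. p k * z k) \<le> - r * ?M" by simp
    have "L2_set z UNIV \<le> L2_set (\<lambda>k. - (2 * r / ?M) * p k) UNIV + L2_set x UNIV"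
      unfolding z_def by (rule L2_set_triangle_ineq)
    also have "\<dots> \<le> 3 * r"
      using x M r0 unfolding L2_set_scale by simp
    finally have "(L2_set z UNIV)\<^sup>2 \<le> (3 * r)\<^sup>2"
      by (intro power_mono) auto
    then have "(\<Sum>k\<in>UNIV. (z k)\<^sup>2) \<le> 9 * r\<^sup>2"
      by (simp add: L2_set_power2 power_mult_distrib)
    have "(\<Sum>k\<in>UNIV. p k * (z k)\<^sup>2) \<le> (\<Sum>k\<in>UNIV. ?M * (z k)\<^sup>2)"
      by (intro sum_mono mult_right_mono p_le zero_le_power2)
    also have "\<dots> \<le> ?M * (9 * r\<^sup>2)"
      using \<open>(\<Sum>k\<in>UNIV. (z k)\<^sup>2) \<le> 9 * r\<^sup>2\<close> M by (simp flip: sum_distrib_left)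
    finally have "(\<Sum>k\<in>UNIV. p k * (z k)\<^sup>2) \<le> 9 * r\<^sup>2 * ?M"
      by (simp add: mult.commute)
    then have "(\<Sum>k\<in>UNIV. p k * (z k)\<^sup>2) / (1 - r) \<le> 9 * r\<^sup>2 * ?M / (1 - r)"
      using r by (simp add: divide_right_mono)
    with lin show ?thesis by linarith
  qed
  also have "\<dots> \<le> 1"
  proof -
    have "9 * r\<^sup>2 * ?M \<le> r * ?M * (1 - r)"
      using mult_left_mono[of "9 * r" "1 - r" "r * ?M"] r r0 M
      by (simp add: power2_eq_square algebra_simps)
    then show ?thesis using r by (simp add: divide_le_eq)
  qed
  finally show "(\<Sum>k\<in>UNIV. p k / (1 - z k)) \<le> 1" .
qed

lemma reciprocal_shift_multiplier_ge:
  fixes p x :: "'i::finite \<Rightarrow> real"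
  assumes p: "p \<in> simplex" "\<forall>k. 0 < p k" and y: "\<And>k. \<mu> * p k + x k < 1"
    and balance: "(\<Sum>k\<in>UNIV. p k / (1 - (\<mu> * p k + x k))) = 1"
    and x: "L2_set x UNIV \<le> r" and r: "r \<le> 1 / 10"
  shows "- 2 * r \<le> \<mu> * L2_set p UNIV"
proof (rule ccontr)
  let ?M = "L2_set p UNIV"
  let ?\<mu>\<^sub>0 = "- (2 * r / ?M)"
  assume "\<not> - 2 * r \<le> \<mu> * ?M"
  then have "\<mu> < ?\<mu>\<^sub>0"
    using L2_set_simplex_pos[OF p(1)] by (simp add: field_simps)
  note test = reciprocal_shift_sum_le_one[OF p(1) x r]
  have "p k / (1 - (\<mu> * p k + x k)) < p k / (1 - (?\<mu>\<^sub>0 * p k + x k))" for k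
  proof -
    have "\<mu> * p k < ?\<mu>\<^sub>0 * p k"
      using \<open>\<mu> < ?\<mu>\<^sub>0\<close> p(2) by (intro mult_strict_right_mono) auto
    moreover have "?\<mu>\<^sub>0 * p k + x k < 1"
      using test(1)[rule_format, of k] r by linarith
    ultimately show ?thesis
      using p(2) y[of k] by (intro divide_strict_left_mono) (auto intro: mult_pos_pos)
  qed
  then have "(\<Sum>k\<in>UNIV. p k / (1 - (\<mu> * p k + x k))) < (\<Sum>k\<in>UNIV. p k / (1 - (?\<mu>\<^sub>0 * p k + x k)))"
    by (intro sum_strict_mono) auto
  with balance test(2) show False
    by linarith
qed

lemma simplex_reciprocal_shift_stability:
  fixes p q c :: "'i::finite \<Rightarrow> real"
  assumes p: "p \<in> simplex" "\<forall>k. 0 < p k" and q: "q \<in> simplex" "\<forall>k. 0 < q k"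
    and shift: "\<And>k. 1 / q k = 1 / p k - (\<mu> + c k)"
    and small: "L2_set (\<lambda>k. p k * c k) UNIV \<le> r" and r: "r \<le> 1 / 10"
  shows "\<bar>q k - p k\<bar> \<le> 5 * r * p k"
proof -
  define y where "y k = \<mu> * p k + p k * c k" for k
  have ratio: "p k / q k = 1 - y k" for k
    using shift[of k] p(2)[rule_format, of k] unfolding y_def
    by (simp add: divide_inverse right_diff_distrib distrib_left)
  have y_lt: "y k < 1" for k
    using ratio[of k] divide_pos_pos[of "p k" "q k"] p(2) q(2) by simp
  have q_eq: "q k = p k / (1 - y k)" for k
  proof -
    have "p k = (1 - y k) * q k"
      using ratio[of k] q(2)[rule_format, of k] by (simp add: divide_eq_eq)
    then show ?thesis using y_lt[of k] by simp
  qed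
  have balance: "(\<Sum>k\<in>UNIV. p k / (1 - (\<mu> * p k + p k * c k))) = 1"
    using q(1) q_eq unfolding simplex_def y_def by simp
  have r0: "0 \<le> r" using small L2_set_nonneg[of "\<lambda>k. p k * c k" UNIV] by linarith
  have "\<bar>\<mu>\<bar> * L2_set p UNIV \<le> 2 * r"
    using reciprocal_shift_multiplier_le[OF p(1) y_lt[unfolded y_def] balance small]
      reciprocal_shift_multiplier_ge[OF p y_lt[unfolded y_def] balance small r] r0
    by (cases "0 \<le> \<mu>") auto
  moreover have "\<bar>\<mu> * p k\<bar> \<le> \<bar>\<mu>\<bar> * L2_set p UNIV"
    using member_le_L2_set[of UNIV k p] p(2)[rule_format, of k]
    by (simp add: abs_mult mult_left_mono)
  moreover have "\<bar>p k * c k\<bar> \<le> r"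
    using abs_le_L2_set[of UNIV k "\<lambda>k. p k * c k"] small by simp
  ultimately have y_abs: "\<bar>y k\<bar> \<le> 3 * r"
    unfolding y_def by linarith
  have den: "0 < 1 - 3 * r" "1 - 3 * r \<le> 1 - y k"
    using y_abs r by auto
  have "\<bar>q k - p k\<bar> = p k * \<bar>y k\<bar> / (1 - y k)"
    using p(2)[rule_format, of k] y_lt[of k] unfolding q_eq by (simp add: field_simps abs_mult abs_divide)
  also have "\<dots> \<le> p k * (3 * r) / (1 - 3 * r)"
    using den p(2)[rule_format, of k] y_abs by (intro frac_le mult_left_mono) auto
  also have "\<dots> \<le> 5 * r * p k"
  proof -
    have "3 * r \<le> 5 * r * (1 - 3 * r)"
      using mult_left_mono[of "15 * r" 2 r] r r0 by (simp add: algebra_simps)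
    then have "3 * r / (1 - 3 * r) \<le> 5 * r"
      using den by (simp add: divide_le_eq)
    then have "p k * (3 * r / (1 - 3 * r)) \<le> p k * (5 * r)"
      using p(2)[rule_format, of k] by (intro mult_left_mono) auto
    then show ?thesis by (simp add: mult.commute)
  qed
  finally show ?thesis .
qed

theorem mainTheorem7:
  fixes N :: nat and C \<eta> :: real
    and b1 b2 a0 a1 a2 :: "'i::finite \<Rightarrow> real"
  assumes "N \<ge> 1"
    and "C = real N + 1"
    and "0 < \<eta>" and "\<eta> \<le> 1 / (270 * C)"
    and "a0 \<in> simplex" and "\<forall>i. 0 < a0 i"
    and "is_argmin_simplex \<eta> b1 a0 a1"
    and "is_argmin_simplex \<eta> b2 a0 a2"
    and "mat_norm (inv_hess_psi \<eta> a1) (\<lambda>i. b1 i - b2 i) \<le> 12 * sqrt \<eta> * C"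
  shows "\<forall>i. \<bar>a2 i - a1 i\<bar> \<le> 60 * \<eta> * C * a1 i"
proof
  fix k
  have a1: "a1 \<in> simplex" "\<forall>k. 0 < a1 k" and a2: "a2 \<in> simplex" "\<forall>k. 0 < a2 k"
    using assms(7,8) unfolding is_argmin_simplex_def by auto
  obtain l1 l2 where l1: "\<And>k. 1 / a1 k = 1 / a0 k + \<eta> * (b1 k - l1)"
    and l2: "\<And>k. 1 / a2 k = 1 / a0 k + \<eta> * (b2 k - l2)"
    using is_argmin_simplex_reciprocal[OF assms(7,3,6)] is_argmin_simplex_reciprocal[OF assms(8,3,6)]
    by blast
  have shift: "1 / a2 k = 1 / a1 k - (\<eta> * (l2 - l1) + \<eta> * (b1 k - b2 k))" for k
    using l1[of k] l2[of k] by (simp add: algebra_simps)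
  have "L2_set (\<lambda>k. a1 k * (\<eta> * (b1 k - b2 k))) UNIV
      = sqrt \<eta> * mat_norm (inv_hess_psi \<eta> a1) (\<lambda>i. b1 i - b2 i)"
    using assms(3) L2_set_scale[of \<eta> "\<lambda>k. a1 k * (b1 k - b2 k)" UNIV]
    unfolding mat_norm_inv_hess_psi[OF less_imp_le[OF assms(3)]]
    by (simp add: mult_ac flip: power2_eq_square)
  also have "\<dots> \<le> sqrt \<eta> * (12 * sqrt \<eta> * C)"
    using assms(3,9) by (intro mult_left_mono) auto
  also have "\<dots> = 12 * \<eta> * C"
    using assms(3) by (simp add: mult_ac flip: power2_eq_square)
  finally have perturbation_le: "L2_set (\<lambda>k. a1 k * (\<eta> * (b1 k - b2 k))) UNIV \<le> 12 * \<eta> * C" .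
  have "12 * \<eta> * C \<le> 1 / 10"
    using assms(2,4) by (simp add: field_simps)
  from simplex_reciprocal_shift_stability[OF a1 a2 shift perturbation_le this]
  show "\<bar>a2 k - a1 k\<bar> \<le> 60 * \<eta> * C * a1 k" by (simp add: mult.assoc)
qed

end
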